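(* For all integers $m,n\ge1$, $$T_{2m,n}(q)=\sum_{r=0}^{m-1}(-1)^r\binom{2m}{r}\frac{(1-q^{n(m-r)})(1-q^{(n+1)(m-r)})q^{rn}}{(1-q)^{2m}(1+q^{m-r})}.$$
   Context: $q$ is an indeterminate. For integers $m,n\ge1$, $$T_{m,n}(q)=\sum_{k=1}^{n}(-1)^{n-k}\left(\frac{1-q^k}{1-q}\right)^{m}q^{\frac m2(n-k)}.$$ *)

theory Defs
  imports "HOL-Computational_Algebra.Polynomial" "HOL-Computational_Algebra.Fraction_Field"
begin

text \<open>We work in the field of rational functions over the integers in an indeterminate
  sqq, which plays the role of q^(1/2); the indeterminate q is sqq^2.  This makes the
  factor q^((m/2)(n-k)) = sqq^(m(n-k)) meaningful for all m.\<close>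

definition sqq :: "int poly fract" where
  "sqq = Fract [:0, 1:] 1"

definition qv :: "int poly fract" where
  "qv = sqq ^ 2"

definition T :: "nat \<Rightarrow> nat \<Rightarrow> int poly fract" where
  "T m n = (\<Sum>k = 1..n. (-1) ^ (n - k) * ((1 - qv ^ k) / (1 - qv)) ^ m * sqq ^ (m * (n - k)))"

end

theory Submission
  imports Defs
begin

text \<open>Both sides X n satisfy X 0 = 0 and
  X (n + 1) = ((1 - q^(n+1)) / (1 - q))^(2m) - q^m X n.
  For T this is read off the definition, since the weights q^((m/2)(n-k)) with m replaced by 2m
  gain exactly a factor q^m when n increases.  For the closed form, the r-th summand at n + 1 plus
  q^m times the r-th summand at n collapses (the factor 1 + q^(m-r) cancels) to
  (-1)^r C(2m,r) P^r (1 - P^(m-r))^2 / (1-q)^(2m) with P = q^(n+1), and summing over r < m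
  gives (1 - P)^(2m) / (1-q)^(2m): expanding the squares, this is the binomial expansion of
  (1 - P)^(2m) folded around its middle term, whose coefficient is recovered from P = 1.\<close>

lemma binomial_alternating_even_fold:
  fixes P :: "'a::comm_ring_1"
  shows "(1 - P) ^ (2 * m) =
    (\<Sum>r<m. (-1) ^ r * of_nat (2 * m choose r) * (P ^ r + P ^ (2 * m - r)))
      + (-1) ^ m * of_nat (2 * m choose m) * P ^ m"
proof -
  define f where "f j = (-1) ^ j * of_nat (2 * m choose j) * P ^ j" for j
  have f_reflect: "f (2 * m - r) = (-1) ^ r * of_nat (2 * m choose r) * P ^ (2 * m - r)"
    if "r \<le> 2 * m" for r
  proof -
    have "(-1::'a) ^ (2 * m - r) = (-1) ^ r"
      using that by (simp add: minus_one_power_iff even_diff_nat)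
    then show ?thesis
      using that by (simp add: f_def binomial_symmetric[symmetric])
  qed
  have "(1 - P) ^ (2 * m) = (\<Sum>j\<le>2 * m. f j)"
    using binomial_ring[of "- P" 1 "2 * m"] by (simp add: f_def power_minus[of P] mult_ac)
  also have "{..2 * m} = {..<m} \<union> {m} \<union> {m<..2 * m}"
    by auto
  also have "(\<Sum>j\<in>{..<m} \<union> {m} \<union> {m<..2 * m}. f j)
      = (\<Sum>j<m. f j) + f m + (\<Sum>j\<in>{m<..2 * m}. f j)"
    by (subst sum.union_disjoint; auto)+
  also have "(\<Sum>j\<in>{m<..2 * m}. f j) = (\<Sum>r<m. f (2 * m - r))"
    by (rule sum.reindex_bij_witness[where i = "\<lambda>r. 2 * m - r" and j = "\<lambda>j. 2 * m - j"]) auto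
  also have "\<dots> = (\<Sum>r<m. (-1) ^ r * of_nat (2 * m choose r) * P ^ (2 * m - r))"
    by (rule sum.cong) (simp_all add: f_reflect)
  finally show ?thesis
    by (simp add: f_def sum.distrib distrib_left)
qed

lemma binomial_alternating_square_defect:
  fixes P :: "'a::comm_ring_1"
  assumes "m \<ge> 1"
  shows "(\<Sum>r<m. (-1) ^ r * of_nat (2 * m choose r) * (P ^ r * (1 - P ^ (m - r)) ^ 2))
    = (1 - P) ^ (2 * m)"
proof -
  define c :: "nat \<Rightarrow> 'a" where "c r = (-1) ^ r * of_nat (2 * m choose r)" for r
  have "(\<Sum>r<m. c r * (1 + 1)) + c m = 0"
    using binomial_alternating_even_fold[of "1::'a" m] assms by (simp add: c_def zero_power)
  then have c_sum: "2 * (\<Sum>r<m. c r) = - c m"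
    by (simp add: sum_distrib_left mult.commute eq_neg_iff_add_eq_0)
  have square: "P ^ r * (1 - P ^ (m - r)) ^ 2 = P ^ r + P ^ (2 * m - r) - 2 * P ^ m"
    if "r < m" for r
  proof -
    obtain s where m: "m = r + s" using \<open>r < m\<close> less_imp_add_positive by blast
    have "P ^ r * (1 - P ^ s) ^ 2 = P ^ r + P ^ r * P ^ s * P ^ s - 2 * (P ^ r * P ^ s)"
      by (simp add: power2_eq_square algebra_simps)
    moreover have "m - r = s" "2 * m - r = r + s + s" using m by simp_all
    ultimately show ?thesis
      unfolding m by (simp only: power_add)
  qed
  have "(\<Sum>r<m. c r * (P ^ r * (1 - P ^ (m - r)) ^ 2))
      = (\<Sum>r<m. c r * (P ^ r + P ^ (2 * m - r)) - c r * (2 * P ^ m))"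
    by (rule sum.cong) (simp_all add: square right_diff_distrib)
  also have "\<dots> = (\<Sum>r<m. c r * (P ^ r + P ^ (2 * m - r))) - 2 * (\<Sum>r<m. c r) * P ^ m"
    by (simp add: sum_subtractf sum_distrib_right[symmetric] mult_ac)
  also have "\<dots> = (1 - P) ^ (2 * m)"
    unfolding c_sum binomial_alternating_even_fold[of P m] by (simp add: c_def)
  finally show ?thesis
    by (simp add: c_def)
qed

definition T_even_closed :: "'a::field \<Rightarrow> nat \<Rightarrow> nat \<Rightarrow> 'a" where
  "T_even_closed q m n = (\<Sum>r = 0..<m. (-1) ^ r * of_nat ((2 * m) choose r) *
       ((1 - q ^ (n * (m - r))) * (1 - q ^ ((n + 1) * (m - r))) * q ^ (r * n)) /
       ((1 - q) ^ (2 * m) * (1 + q ^ (m - r))))"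

lemma T_even_closed_0 [simp]: "T_even_closed q m 0 = 0"
  by (simp add: T_even_closed_def)

lemma T_even_closed_summand_Suc:
  fixes q :: "'a::field"
  assumes "1 + q ^ s \<noteq> 0"
  shows "(1 - q ^ ((n + 1) * s)) * (1 - q ^ ((n + 1 + 1) * s)) * q ^ (r * (n + 1)) / (1 + q ^ s)
      + q ^ (r + s) * ((1 - q ^ (n * s)) * (1 - q ^ ((n + 1) * s)) * q ^ (r * n) / (1 + q ^ s))
    = (q ^ (n + 1)) ^ r * (1 - (q ^ (n + 1)) ^ s) ^ 2"
proof -
  define a b c u where "a = q ^ (n * s)" and "b = q ^ (r * n)" and "c = q ^ r" and "u = q ^ s"
  have "(1 - a * u) * (1 - a * u * u) * (b * c) / (1 + u)
        + c * u * ((1 - a) * (1 - a * u) * b / (1 + u))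
      = ((1 - a * u) * (1 - a * u * u) * (b * c) + c * u * ((1 - a) * (1 - a * u) * b)) / (1 + u)"
    by (simp add: add_divide_distrib)
  also have "\<dots> = (1 + u) * (b * c * (1 - a * u) ^ 2) / (1 + u)"
    by (simp add: algebra_simps power2_eq_square)
  also have "\<dots> = b * c * (1 - a * u) ^ 2"
    using assms by (simp add: u_def)
  finally have reduced: "(1 - a * u) * (1 - a * u * u) * (b * c) / (1 + u)
        + c * u * ((1 - a) * (1 - a * u) * b / (1 + u))
      = b * c * (1 - a * u) ^ 2" .
  have powers: "q ^ ((n + 1) * s) = a * u" "q ^ ((n + 1 + 1) * s) = a * u * u"
    "q ^ (r * (n + 1)) = b * c" "q ^ (r + s) = c * u" "(q ^ (n + 1)) ^ r = b * c"
    "(q ^ (n + 1)) ^ s = a * u"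
    by (simp_all add: a_def b_def c_def u_def algebra_simps power_add power_mult)
  show ?thesis
    unfolding powers a_def[symmetric] b_def[symmetric] u_def[symmetric] by (rule reduced)
qed

lemma T_even_closed_Suc:
  fixes q :: "'a::field"
  assumes "m \<ge> 1" and denom_nonzero: "\<And>r. r < m \<Longrightarrow> 1 + q ^ (m - r) \<noteq> 0"
  shows "T_even_closed q m (Suc n)
    = ((1 - q ^ Suc n) / (1 - q)) ^ (2 * m) - q ^ m * T_even_closed q m n"
proof -
  define c :: "nat \<Rightarrow> 'a" where "c r = (-1) ^ r * of_nat (2 * m choose r)" for r
  define A where "A k r = (1 - q ^ (k * (m - r))) * (1 - q ^ ((k + 1) * (m - r))) * q ^ (r * k)
    / (1 + q ^ (m - r))" for k r
  have closed_eq: "T_even_closed q m k = (\<Sum>r<m. c r * A k r) / (1 - q) ^ (2 * m)" for k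
    by (simp add: T_even_closed_def A_def c_def sum_divide_distrib atLeast0LessThan mult.commute)
  have term_step: "A (Suc n) r + q ^ m * A n r = (q ^ Suc n) ^ r * (1 - (q ^ Suc n) ^ (m - r)) ^ 2"
    if "r < m" for r
    using T_even_closed_summand_Suc[of q "m - r" n r] denom_nonzero[OF that] that
    by (simp add: A_def)
  have "(\<Sum>r<m. c r * A (Suc n) r) + q ^ m * (\<Sum>r<m. c r * A n r)
      = (\<Sum>r<m. c r * (A (Suc n) r + q ^ m * A n r))"
    by (simp add: sum_distrib_left sum.distrib distrib_left mult.left_commute)
  also have "\<dots> = (\<Sum>r<m. c r * ((q ^ Suc n) ^ r * (1 - (q ^ Suc n) ^ (m - r)) ^ 2))"
    by (rule sum.cong) (simp_all add: term_step)
  also have "\<dots> = (1 - q ^ Suc n) ^ (2 * m)"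
    using binomial_alternating_square_defect[OF \<open>m \<ge> 1\<close>] by (simp add: c_def)
  finally show ?thesis
    by (simp add: closed_eq power_divide eq_diff_eq flip: add_divide_distrib)
qed

lemma T_0 [simp]: "T m 0 = 0"
  by (simp add: T_def)

lemma T_Suc: "T m (Suc n) = ((1 - qv ^ Suc n) / (1 - qv)) ^ m - sqq ^ m * T m n"
proof -
  define a where "a k = ((1 - qv ^ k) / (1 - qv)) ^ m" for k
  have "T m (Suc n) = (\<Sum>k = 1..n. (-1) ^ (Suc n - k) * a k * sqq ^ (m * (Suc n - k))) + a (Suc n)"
    by (simp add: T_def a_def)
  also have "(\<Sum>k = 1..n. (-1) ^ (Suc n - k) * a k * sqq ^ (m * (Suc n - k)))
      = (\<Sum>k = 1..n. - (sqq ^ m * ((-1) ^ (n - k) * a k * sqq ^ (m * (n - k)))))"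
    by (rule sum.cong) (simp_all add: Suc_diff_le power_add)
  finally show ?thesis
    by (simp add: T_def a_def sum_negf sum_distrib_left)
qed

text \<open>The fraction field of int poly is an ordered field (polynomials are ordered by the sign
  of the leading coefficient), so qv = sqq^2 is nonnegative and 1 + qv^j never vanishes.\<close>

lemma qv_power_nonneg: "0 \<le> qv ^ k"
  by (simp add: qv_def zero_le_power)

theorem lemma2p2:
  fixes m n :: nat
  assumes "m \<ge> 1" and "n \<ge> 1"
  shows "T (2 * m) n =
    (\<Sum>r = 0..<m. (-1) ^ r * of_nat ((2 * m) choose r) *
       ((1 - qv ^ (n * (m - r))) * (1 - qv ^ ((n + 1) * (m - r))) * qv ^ (r * n)) /
       ((1 - qv) ^ (2 * m) * (1 + qv ^ (m - r))))"
proof -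
  have denom_nonzero: "1 + qv ^ j \<noteq> 0" for j
    using qv_power_nonneg[of j] by (metis add_pos_nonneg less_irrefl zero_less_one)
  have sqq_power: "sqq ^ (2 * m) = qv ^ m"
    by (simp add: qv_def power_mult)
  have "T (2 * m) k = T_even_closed qv m k" for k
  proof (induction k)
    case (Suc k)
    then show ?case
      by (simp add: T_Suc T_even_closed_Suc[OF \<open>m \<ge> 1\<close> denom_nonzero] sqq_power)
  qed simp
  then show ?thesis
    by (simp add: T_even_closed_def)
qed

end
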